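(* Let $r\ge1$ be an integer, $\beta>0$, and let $Q$ be a complex polynomial of degree $r$ with $Q(0)=0$. Define polynomials $\widehat P_n(x)$, $n\ge0$, by $$\sum_{n=0}^\infty\frac{\widehat P_n(x)}{n!(\beta)_n}z^n=e^{Q(z)}\,{}_1F_1\left(\begin{matrix}-x\\ \beta\end{matrix};-z\right),$$ and let $\sigma$ be the operator $\sigma=x\,\partial^2T_-+\beta\,\partial$, where $\partial f(x)=f(x+1)-f(x)$ and $T_-f(x)=f(x-1)$; that is, $\sigma f(x)=(x+\beta)f(x+1)-(2x+\beta)f(x)+xf(x-1)$. Then for all $n\ge1$, $$\sigma\widehat P_n(x)=n(n+\beta-1)\,\widehat P_{n-1}(x).$$
   Context: $(a)_n=a(a+1)\cdots(a+n-1)$, $(a)_0=1$; ${}_1F_1\left(\begin{matrix}a\\ b\end{matrix};x\right)=\sum_{m\ge0}\frac{(a)_m}{(b)_m}\frac{x^m}{m!}$. *)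

theory Defs
  imports Complex_Main "HOL-Computational_Algebra.Computational_Algebra"
begin

definition hyp1F1_fps :: "complex \<Rightarrow> complex \<Rightarrow> complex fps" where
  "hyp1F1_fps a b = Abs_fps (\<lambda>m. pochhammer a m / pochhammer b m / fact m)"

definition sigma_op :: "real \<Rightarrow> (complex \<Rightarrow> complex) \<Rightarrow> complex \<Rightarrow> complex" where
  "sigma_op \<beta> f x = (x + of_real \<beta>) * f (x + 1) - (2 * x + of_real \<beta>) * f x + x * f (x - 1)"

end

theory Submission
  imports Defs
begin

text \<open>The coefficient of \<open>z\<^sup>m\<close> in \<open>\<^sub>1F\<^sub>1(-x; \<beta>; -z)\<close> is the falling factorial
  \<open>x(x-1)\<dots>(x-m+1)\<close> divided by \<open>(\<beta>)\<^sub>m m!\<close>, and \<open>\<sigma>\<close> lowers the falling factorial of degree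
  \<open>m+1\<close> to \<open>(m+1)(m+\<beta>)\<close> times the one of degree \<open>m\<close>; hence \<open>\<sigma>\<close> shifts these coefficients down
  by one and kills the constant one. Since \<open>\<sigma>\<close> is linear and the coefficients of \<open>e\<^sup>Q\<close> do not
  depend on \<open>x\<close>, \<open>\<sigma>\<close> maps the \<open>n\<close>-th coefficient of the product to the \<open>(n-1)\<close>-st, and
  the factor \<open>n(n+\<beta>-1)\<close> is the ratio of the normalisations \<open>n!(\<beta>)\<^sub>n\<close> and
  \<open>(n-1)!(\<beta>)\<^sub>n\<^sub>-\<^sub>1\<close>.\<close>

definition falling_factorial :: "nat \<Rightarrow> 'a::comm_ring_1 \<Rightarrow> 'a" where
  "falling_factorial k y = (-1)^k * pochhammer (-y) k"

lemma falling_factorial_Suc: "falling_factorial (Suc k) y = y * falling_factorial k (y - 1)"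
  unfolding falling_factorial_def pochhammer_rec by (simp add: algebra_simps)

lemma falling_factorial_Suc': "falling_factorial (Suc k) y = falling_factorial k y * (y - of_nat k)"
  unfolding falling_factorial_def pochhammer_rec' by (simp add: algebra_simps)

lemma sigma_op_cmult: "sigma_op \<beta> (\<lambda>y. c * f y) x = c * sigma_op \<beta> f x"
  unfolding sigma_op_def by (simp add: algebra_simps)

lemma sigma_op_sum:
  "sigma_op \<beta> (\<lambda>y. \<Sum>i\<in>S. a i * f i y) x = (\<Sum>i\<in>S. a i * sigma_op \<beta> (f i) x)"
  unfolding sigma_op_def
  by (simp add: sum_distrib_left sum_subtractf[symmetric] sum.distrib[symmetric] algebra_simps)

lemma sigma_op_const: "sigma_op \<beta> (\<lambda>_. c) x = 0"
  unfolding sigma_op_def by (simp add: algebra_simps)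

lemma sigma_op_falling_factorial_Suc:
  "sigma_op \<beta> (falling_factorial (Suc k)) x
     = of_nat (Suc k) * (of_nat k + of_real \<beta>) * falling_factorial k x"
proof -
  let ?f = "falling_factorial k"
  have shift_up: "falling_factorial (Suc k) (x + 1) = (x + 1) * ?f x"
    using falling_factorial_Suc[of k "x + 1"] by simp
  have shift_down: "x * ?f (x - 1) = (x - of_nat k) * ?f x"
    using falling_factorial_Suc[of k x] falling_factorial_Suc'[of k x] by (simp add: algebra_simps)
  have "sigma_op \<beta> (falling_factorial (Suc k)) x
      = (x + of_real \<beta>) * (x + 1) * ?f x - (2 * x + of_real \<beta>) * (x - of_nat k) * ?f x
        + x * ?f (x - 1) * (x - 1 - of_nat k)"
    unfolding sigma_op_def shift_up falling_factorial_Suc'[of k x]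
      falling_factorial_Suc'[of k "x - 1"]
    by (simp add: algebra_simps)
  also have "\<dots> = of_nat (Suc k) * (of_nat k + of_real \<beta>) * ?f x"
    unfolding shift_down by (simp add: algebra_simps)
  finally show ?thesis .
qed

definition kummer_coeff :: "complex \<Rightarrow> nat \<Rightarrow> complex \<Rightarrow> complex" where
  "kummer_coeff b m y = falling_factorial m y / (pochhammer b m * fact m)"

lemma fps_nth_hyp1F1_reflect:
  "fps_nth (fps_compose (hyp1F1_fps (- y) b) (- fps_X)) m = kummer_coeff b m y"
  unfolding fps_compose_uminus' hyp1F1_fps_def kummer_coeff_def falling_factorial_def
  by (simp add: algebra_simps)

lemma pochhammer_of_real_pos_neq_0:
  assumes "\<beta> > 0"
  shows "pochhammer (of_real \<beta>) m \<noteq> (0 :: complex)"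
  using pochhammer_pos[OF assms, of m] by (simp add: pochhammer_of_real)

lemma sigma_op_kummer_coeff_Suc:
  assumes "\<beta> > 0"
  shows "sigma_op \<beta> (kummer_coeff (of_real \<beta>) (Suc k)) x = kummer_coeff (of_real \<beta>) k x"
proof -
  let ?B = "of_real \<beta> :: complex"
  have norm_Suc: "pochhammer ?B (Suc k) * fact (Suc k)
      = (of_nat (Suc k) * (of_nat k + ?B)) * (pochhammer ?B k * fact k)"
    unfolding pochhammer_rec' fact_Suc by (simp add: algebra_simps)
  have "of_nat k + ?B = of_real (real k + \<beta>)" by simp
  with assms have rate_neq_0: "of_nat (Suc k) * (of_nat k + ?B) \<noteq> 0"
    by (metis add_nonneg_pos of_nat_0_le_iff of_nat_eq_0_iff of_real_eq_0_iff
        less_irrefl mult_eq_0_iff Zero_not_Suc)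
  have "kummer_coeff ?B (Suc k)
      = (\<lambda>y. inverse (pochhammer ?B (Suc k) * fact (Suc k)) * falling_factorial (Suc k) y)"
    by (simp add: kummer_coeff_def fun_eq_iff divide_inverse mult.commute)
  then have "sigma_op \<beta> (kummer_coeff ?B (Suc k)) x
      = inverse (pochhammer ?B (Suc k) * fact (Suc k))
        * (of_nat (Suc k) * (of_nat k + ?B) * falling_factorial k x)"
    by (simp add: sigma_op_cmult sigma_op_falling_factorial_Suc)
  also have "\<dots> = kummer_coeff ?B k x"
    using rate_neq_0 unfolding norm_Suc kummer_coeff_def
    by (metis (no_types) nonzero_mult_divide_mult_cancel_left divide_inverse_commute)
  finally show ?thesis .
qed

lemma sigma_op_kummer_coeff_0: "sigma_op \<beta> (kummer_coeff b 0) x = 0"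
  unfolding kummer_coeff_def falling_factorial_def by (simp add: sigma_op_const)

lemma sigma_op_kummer_convolution:
  assumes "\<beta> > 0"
  shows "sigma_op \<beta> (\<lambda>y. \<Sum>i=0..Suc k. e i * kummer_coeff (of_real \<beta>) (Suc k - i) y) x
       = (\<Sum>i=0..k. e i * kummer_coeff (of_real \<beta>) (k - i) x)"
proof -
  have "sigma_op \<beta> (\<lambda>y. \<Sum>i=0..Suc k. e i * kummer_coeff (of_real \<beta>) (Suc k - i) y) x
      = (\<Sum>i=0..k. e i * sigma_op \<beta> (kummer_coeff (of_real \<beta>) (Suc k - i)) x)"
    unfolding sigma_op_sum by (simp add: sigma_op_kummer_coeff_0)
  also have "\<dots> = (\<Sum>i=0..k. e i * kummer_coeff (of_real \<beta>) (k - i) x)"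
    by (rule sum.cong) (simp_all add: Suc_diff_le sigma_op_kummer_coeff_Suc[OF assms])
  finally show ?thesis .
qed

lemma coeff_eq_convolution:
  assumes "\<And>y. Abs_fps (\<lambda>n. P n y / A n) = E * fps_compose (hyp1F1_fps (- y) b) (- fps_X)"
    and "A m \<noteq> 0"
  shows "P m y = A m * (\<Sum>i=0..m. fps_nth E i * kummer_coeff b (m - i) y)"
proof -
  have "P m y / A m = fps_nth (E * fps_compose (hyp1F1_fps (- y) b) (- fps_X)) m"
    using arg_cong[OF assms(1)[of y], of "\<lambda>F. fps_nth F m"] by simp
  also have "\<dots> = (\<Sum>i=0..m. fps_nth E i * kummer_coeff b (m - i) y)"
    by (simp add: fps_mult_nth fps_nth_hyp1F1_reflect)
  finally show ?thesis using assms(2) by (simp add: field_simps)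
qed

theorem mainTheorem4:
  fixes r :: nat and \<beta> :: real and Q :: "complex poly" and P :: "nat \<Rightarrow> complex \<Rightarrow> complex"
  assumes "r \<ge> 1" and "\<beta> > 0" and "degree Q = r" and "poly Q 0 = 0"
    and "\<And>x. Abs_fps (\<lambda>n. P n x / (fact n * pochhammer (of_real \<beta>) n))
               = (fps_exp 1 oo fps_of_poly Q) * fps_compose (hyp1F1_fps (- x) (of_real \<beta>)) (- fps_X)"
    and "n \<ge> 1"
  shows "sigma_op \<beta> (P n) x = of_nat n * (of_nat n + of_real \<beta> - 1) * P (n - 1) x"
proof -
  define A :: "nat \<Rightarrow> complex" where "A m = fact m * pochhammer (of_real \<beta>) m" for m :: nat
  define e where "e = fps_nth (fps_exp 1 oo fps_of_poly Q)"
  define S where "S m = (\<lambda>y. \<Sum>i=0..m. e i * kummer_coeff (of_real \<beta>) (m - i) y)" for m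
  have P_eq: "P m = (\<lambda>y. A m * S m y)" for m
    using coeff_eq_convolution[OF assms(5)] pochhammer_of_real_pos_neq_0[OF assms(2)]
    unfolding A_def S_def e_def by (simp add: fun_eq_iff)
  obtain k where n: "n = Suc k" using assms(6) by (cases n) auto
  have "A n = of_nat n * (of_nat n + of_real \<beta> - 1) * A k"
    unfolding A_def n pochhammer_rec' by (simp add: algebra_simps)
  moreover have "sigma_op \<beta> (P n) x = A n * sigma_op \<beta> (S n) x"
    by (simp add: P_eq sigma_op_cmult)
  moreover have "sigma_op \<beta> (S n) x = S k x"
    unfolding S_def n by (rule sigma_op_kummer_convolution[OF assms(2)])
  ultimately show ?thesis by (simp add: P_eq n)
qed

end
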